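(* Let $p$ be a prime and $M$ an $m'\times m$ matrix over $\mathbb{F}_p$. Let $1\le L\le p$ be an integer and $\mathbf{L}=(L_1,\dots,L_m)$ integers with $L\le L_i\le2L$. For $\mathbf{b}\in\mathbb{Z}^{m'}$ and $D\subseteq\mathbb{Z}^m$ set $S(\mathbf{b};D)=\{\mathbf{x}\in D: M\mathbf{x}\equiv\mathbf{b}\pmod p\}$. Then for every $\mathbf{N}\in\mathbb{Z}^m$ and every $\mathbf{b}$, $$|S(\mathbf{b};[\mathbf{N},\mathbf{N}+\mathbf{L}])|\le|S(\mathbf{0};[-\mathbf{L},\mathbf{L}])|,$$ and if $M$ has rank $\min\{m',m\}$ over $\mathbb{F}_p$, then $$|S(\mathbf{0};[-\mathbf{L},\mathbf{L}])|\ll_mL^{\dim\ker M},$$ where $\ker M$ is the kernel of $M$ acting on $\mathbb{F}_p^m$.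
   Context: $[\mathbf{N},\mathbf{N}+\mathbf{L}]=\prod_{i=1}^m\{x\in\mathbb{Z}:N_i\le x\le N_i+L_i\}$ and $[-\mathbf{L},\mathbf{L}]=\prod_{i=1}^m\{x\in\mathbb{Z}:-L_i\le x\le L_i\}$. *)

theory Defs
  imports "HOL-Number_Theory.Number_Theory"
begin

text \<open>Vectors in Z^n are functions nat => int, relevant on indices < n.
  An m' x m matrix over F_p is given by integer entries M r j (r < m', j < m), read mod p.\<close>

definition mat_vec_cong :: "int \<Rightarrow> nat \<Rightarrow> nat \<Rightarrow> (nat \<Rightarrow> nat \<Rightarrow> int) \<Rightarrow> (nat \<Rightarrow> int) \<Rightarrow> (nat \<Rightarrow> int) \<Rightarrow> bool" where
  "mat_vec_cong p m' m M x b \<longleftrightarrow> (\<forall>r<m'. [(\<Sum>j<m. M r j * x j) = b r] (mod p))"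

definition Ssol :: "int \<Rightarrow> nat \<Rightarrow> nat \<Rightarrow> (nat \<Rightarrow> nat \<Rightarrow> int) \<Rightarrow> (nat \<Rightarrow> int) \<Rightarrow> (nat \<Rightarrow> int) set \<Rightarrow> (nat \<Rightarrow> int) set" where
  "Ssol p m' m M b D = {x \<in> D. mat_vec_cong p m' m M x b}"

definition box :: "nat \<Rightarrow> (nat \<Rightarrow> int) \<Rightarrow> (nat \<Rightarrow> int) \<Rightarrow> (nat \<Rightarrow> int) set" where
  "box m lo hi = {x. (\<forall>i<m. lo i \<le> x i \<and> x i \<le> hi i) \<and> (\<forall>i\<ge>m. x i = 0)}"

definition lin_indep_mod :: "int \<Rightarrow> nat \<Rightarrow> (nat \<Rightarrow> nat \<Rightarrow> int) \<Rightarrow> nat \<Rightarrow> bool" where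
  "lin_indep_mod p n vs k \<longleftrightarrow>
     (\<forall>c :: nat \<Rightarrow> int. (\<forall>j<n. [(\<Sum>i<k. c i * vs i j) = 0] (mod p)) \<longrightarrow> (\<forall>i<k. [c i = 0] (mod p)))"

definition rank_mod :: "int \<Rightarrow> nat \<Rightarrow> nat \<Rightarrow> (nat \<Rightarrow> nat \<Rightarrow> int) \<Rightarrow> nat" where
  "rank_mod p m' m M = Max {k. \<exists>f. (\<forall>i<k. f i < m) \<and> lin_indep_mod p m' (\<lambda>i r. M r (f i)) k}"

definition ker_dim_mod :: "int \<Rightarrow> nat \<Rightarrow> nat \<Rightarrow> (nat \<Rightarrow> nat \<Rightarrow> int) \<Rightarrow> nat" where
  "ker_dim_mod p m' m M = Max {k. \<exists>vs. (\<forall>i<k. mat_vec_cong p m' m M (vs i) (\<lambda>_. 0)) \<and> lin_indep_mod p m vs k}"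

end

theory Submission
  imports Defs
begin

text \<open>Subtracting one fixed solution maps the solutions in a translated box injectively to
  homogeneous solutions in the centred box \<open>[-L, L]\<close>. For the second bound pick
  \<open>k = rank M\<close> independent pivot columns. Two homogeneous solutions that agree on the free
  coordinates differ by a kernel vector supported on the pivots, which must vanish mod \<open>p\<close>; so a
  solution in \<open>[-L, L]\<close> is determined by its free coordinates (at most \<open>4L + 1\<close> values each)
  and the quotients \<open>(x i + 2L) div p \<in> {0..4}\<close> of its pivot coordinates, giving at most
  \<open>5^m L^(m - k)\<close> solutions. Finally \<open>m - k \<le> dim ker M\<close>: if \<open>k = m' < m\<close>, the pivot columns
  span, so each free column \<open>j\<close> is a combination of them, and the resulting kernel vectors
  are independent because their restrictions to the free coordinates are diagonal.\<close>

lemma not_cong_zero_mult: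
  fixes p a b :: int
  assumes "prime p" "\<not> [a = 0] (mod p)" "\<not> [b = 0] (mod p)"
  shows "\<not> [a * b = 0] (mod p)"
  using assms by (simp add: cong_0_iff prime_dvd_mult_iff)

lemma one_not_cong_zero_prime: "prime (p::int) \<Longrightarrow> \<not> [1 = 0] (mod p)"
  by (metis cong_0_iff not_prime_unit)

text \<open>Gaussian elimination on the last coordinate: a vector with nonzero last coordinate
  is used to clear that coordinate from all the others.\<close>
lemma exists_nontrivial_relation_mod:
  fixes p :: int and vs :: "nat \<Rightarrow> nat \<Rightarrow> int"
  assumes p: "prime p" and "finite I" "card I > n"
  shows "\<exists>c. (\<forall>j<n. [(\<Sum>i\<in>I. c i * vs i j) = 0] (mod p)) \<and> (\<exists>i\<in>I. \<not> [c i = 0] (mod p))"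
  using assms(2,3)
proof (induction n arbitrary: I vs)
  case 0
  then obtain i where "i \<in> I" by fastforce
  then show ?case using one_not_cong_zero_prime[OF p] by (intro exI[of _ "\<lambda>_. 1"]) auto
next
  case (Suc n)
  show ?case
  proof (cases "\<forall>i\<in>I. [vs i n = 0] (mod p)")
    case True
    obtain c where c: "\<forall>j<n. [(\<Sum>i\<in>I. c i * vs i j) = 0] (mod p)" "\<exists>i\<in>I. \<not> [c i = 0] (mod p)"
      using Suc.IH[of I vs] Suc.prems by auto
    have "[(\<Sum>i\<in>I. c i * vs i n) = (\<Sum>i\<in>I. c i * 0)] (mod p)"
      by (intro cong_sum cong_scalar_left) (use True in auto)
    with c show ?thesis by (intro exI[of _ c]) (auto simp: less_Suc_eq)
  next
    case False
    then obtain i0 where i0: "i0 \<in> I" "\<not> [vs i0 n = 0] (mod p)" by auto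
    define a where "a = vs i0 n"
    define I' where "I' = I - {i0}"
    define w where "w = (\<lambda>i j. a * vs i j - vs i n * vs i0 j)"
    have "finite I'" "card I' > n" using Suc.prems i0 unfolding I'_def by auto
    then obtain c' i where c': "\<forall>j<n. [(\<Sum>i\<in>I'. c' i * w i j) = 0] (mod p)"
        and i: "i \<in> I'" "\<not> [c' i = 0] (mod p)"
      using Suc.IH[of I' w] by blast
    define c where "c = (\<lambda>i. if i = i0 then - (\<Sum>i\<in>I'. c' i * vs i n) else c' i * a)"
    have eq: "(\<Sum>i\<in>I. c i * vs i j) = (\<Sum>i\<in>I'. c' i * w i j)" for j
    proof -
      have "(\<Sum>i\<in>I. c i * vs i j) = c i0 * vs i0 j + (\<Sum>i\<in>I'. c' i * a * vs i j)"
        using Suc.prems i0 unfolding I'_def by (simp add: sum.remove c_def)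
      then show ?thesis
        unfolding c_def w_def
        by (simp add: algebra_simps sum_subtractf sum_distrib_left sum_distrib_right)
    qed
    have "w i n = 0" for i unfolding w_def a_def by simp
    then have "\<forall>j<Suc n. [(\<Sum>i\<in>I. c i * vs i j) = 0] (mod p)"
      using c' by (auto simp: less_Suc_eq eq)
    moreover have "\<not> [c i = 0] (mod p)" "i \<in> I"
      using not_cong_zero_mult[OF p i(2) i0(2)[folded a_def]] i(1) unfolding c_def I'_def by auto
    ultimately show ?thesis by blast
  qed
qed

lemma lin_indep_mod_le:
  assumes "prime p" "lin_indep_mod p n vs k"
  shows "k \<le> n"
proof (rule ccontr)
  assume "\<not> k \<le> n"
  then obtain c where "\<forall>j<n. [(\<Sum>i<k. c i * vs i j) = 0] (mod p)" "\<exists>i<k. \<not> [c i = 0] (mod p)"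
    using exists_nontrivial_relation_mod[OF assms(1), of "{..<k}" n vs] by auto
  with assms(2) show False unfolding lin_indep_mod_def by blast
qed

lemma lin_indep_mod_inj_on:
  assumes "prime p" "lin_indep_mod p n vs k"
  shows "inj_on vs {..<k}"
proof (rule inj_onI, rule ccontr)
  fix a b assume ab: "a \<in> {..<k}" "b \<in> {..<k}" "vs a = vs b" "a \<noteq> b"
  define c :: "nat \<Rightarrow> int" where "c = (\<lambda>i. if i = a then 1 else if i = b then -1 else 0)"
  have "(\<Sum>i<k. c i * vs i j) = (\<Sum>i<k. (if i = a then vs a j else 0) - (if i = b then vs b j else 0))" for j
    using ab(4) by (intro sum.cong) (auto simp: c_def)
  then have "(\<Sum>i<k. c i * vs i j) = 0" for j
    using ab by (simp add: sum_subtractf)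
  then have "[c a = 0] (mod p)"
    using assms(2) ab unfolding lin_indep_mod_def by auto
  then show False using one_not_cong_zero_prime[OF assms(1)] by (simp add: c_def)
qed

lemma lin_indep_mod_columns_inj_on:
  assumes "prime p" "lin_indep_mod p n (\<lambda>i r. M r (f i)) k"
  shows "inj_on f {..<k}"
  using inj_on_imageI2[of "\<lambda>c r. M r c" f, unfolded comp_def] lin_indep_mod_inj_on[OF assms] .

lemma mat_vec_cong_diff:
  assumes "mat_vec_cong p m' m M x b" "mat_vec_cong p m' m M y c"
  shows "mat_vec_cong p m' m M (\<lambda>j. x j - y j) (\<lambda>r. b r - c r)"
  unfolding mat_vec_cong_def
proof (intro allI impI)
  fix r assume "r < m'"
  then have "[(\<Sum>j<m. M r j * x j) - (\<Sum>j<m. M r j * y j) = b r - c r] (mod p)"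
    using assms unfolding mat_vec_cong_def by (intro cong_diff) auto
  then show "[(\<Sum>j<m. M r j * (x j - y j)) = b r - c r] (mod p)"
    by (simp add: algebra_simps sum_subtractf)
qed

lemma
  fixes A :: "nat \<Rightarrow> int set"
  assumes "\<And>i. i < m \<Longrightarrow> finite (A i)"
  shows finite_vectors_in: "finite {y. (\<forall>i<m. y i \<in> A i) \<and> (\<forall>i\<ge>m. y i = 0)}"
    and card_vectors_in_le: "card {y. (\<forall>i<m. y i \<in> A i) \<and> (\<forall>i\<ge>m. y i = 0)} \<le> (\<Prod>i<m. card (A i))"
proof -
  let ?S = "{y. (\<forall>i<m. y i \<in> A i) \<and> (\<forall>i\<ge>m. y i = 0)}"
  have inj: "inj_on (\<lambda>y. restrict y {..<m}) ?S"
  proof (rule inj_onI, rule ext)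
    fix x y i assume "x \<in> ?S" "y \<in> ?S" "restrict x {..<m} = restrict y {..<m}"
    then show "x i = y i" by (cases "i < m") (auto dest: fun_cong[of _ _ i])
  qed
  have sub: "(\<lambda>y. restrict y {..<m}) ` ?S \<subseteq> PiE {..<m} A"
    by (rule image_subsetI) (simp add: restrict_PiE_iff)
  have fin: "finite (PiE {..<m} A)" using assms by (intro finite_PiE) auto
  show "finite ?S" using finite_imageD[OF finite_subset[OF sub fin] inj] .
  show "card ?S \<le> (\<Prod>i<m. card (A i))"
    using card_inj_on_le[OF inj sub fin] card_PiE[of "{..<m}" A] by simp
qed

lemma finite_Ssol_box: "finite (Ssol p m' m M b (box m lo hi))"
proof -
  have "box m lo hi = {y. (\<forall>i<m. y i \<in> {lo i..hi i}) \<and> (\<forall>i\<ge>m. y i = 0)}"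
    unfolding box_def by auto
  then have "finite (box m lo hi)" using finite_vectors_in[of m "\<lambda>i. {lo i..hi i}"] by simp
  then show ?thesis unfolding Ssol_def by simp
qed

lemma card_Ssol_box_le_card_Ssol_centred:
  "card (Ssol p m' m M b (box m N (\<lambda>i. N i + Ls i)))
     \<le> card (Ssol p m' m M (\<lambda>_. 0) (box m (\<lambda>i. - Ls i) Ls))"
proof (cases "Ssol p m' m M b (box m N (\<lambda>i. N i + Ls i)) = {}")
  case False
  then obtain x0 where x0: "x0 \<in> Ssol p m' m M b (box m N (\<lambda>i. N i + Ls i))" by blast
  let ?g = "\<lambda>x i. x i - x0 i"
  have "inj_on ?g (Ssol p m' m M b (box m N (\<lambda>i. N i + Ls i)))"
    by (rule inj_onI) (auto simp: fun_eq_iff)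
  moreover have "?g x \<in> Ssol p m' m M (\<lambda>_. 0) (box m (\<lambda>i. - Ls i) Ls)"
    if x: "x \<in> Ssol p m' m M b (box m N (\<lambda>i. N i + Ls i))" for x
  proof -
    have "N i \<le> x i" "x i \<le> N i + Ls i" "N i \<le> x0 i" "x0 i \<le> N i + Ls i" if "i < m" for i
      using x x0 that unfolding Ssol_def box_def by auto
    then have "?g x \<in> box m (\<lambda>i. - Ls i) Ls"
      using x x0 unfolding Ssol_def box_def by force
    moreover have "mat_vec_cong p m' m M (?g x) (\<lambda>r. b r - b r)"
      using x x0 unfolding Ssol_def by (intro mat_vec_cong_diff) auto
    ultimately show ?thesis unfolding Ssol_def by simp
  qed
  ultimately show ?thesis by (intro card_inj_on_le finite_Ssol_box) auto
qed simp

lemma rank_mod_witness: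
  assumes "prime p"
  obtains f where "\<forall>i<rank_mod p m' m M. f i < m"
    "lin_indep_mod p m' (\<lambda>i r. M r (f i)) (rank_mod p m' m M)"
proof -
  let ?R = "{k. \<exists>f. (\<forall>i<k. f i < m) \<and> lin_indep_mod p m' (\<lambda>i r. M r (f i)) k}"
  have "?R \<subseteq> {..m'}" using lin_indep_mod_le[OF assms] by auto
  then have "finite ?R" by (rule finite_subset) simp
  moreover have "0 \<in> ?R" unfolding lin_indep_mod_def by auto
  ultimately have "Max ?R \<in> ?R" using Max_in by blast
  then show ?thesis using that unfolding rank_mod_def by blast
qed

lemma le_ker_dim_mod:
  assumes "prime p" "\<forall>i<k. mat_vec_cong p m' m M (vs i) (\<lambda>_. 0)" "lin_indep_mod p m vs k"
  shows "k \<le> ker_dim_mod p m' m M"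
proof -
  let ?K = "{k. \<exists>vs. (\<forall>i<k. mat_vec_cong p m' m M (vs i) (\<lambda>_. 0)) \<and> lin_indep_mod p m vs k}"
  have "?K \<subseteq> {..m}" using lin_indep_mod_le[OF assms(1)] by auto
  then have "finite ?K" by (rule finite_subset) simp
  moreover have "k \<in> ?K" using assms(2,3) by blast
  ultimately show ?thesis unfolding ker_dim_mod_def by (rule Max_ge)
qed

lemma kernel_vector_vanishes_on_indep_columns:
  assumes indep: "lin_indep_mod p m' (\<lambda>i r. M r (f i)) k"
    and f: "inj_on f {..<k}" "\<forall>i<k. f i < m"
    and z: "mat_vec_cong p m' m M z (\<lambda>_. 0)" "\<forall>l<m. l \<notin> f ` {..<k} \<longrightarrow> z l = 0"
    and i: "i < k"
  shows "[z (f i) = 0] (mod p)"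
proof -
  have reindex: "(\<Sum>l<m. M r l * z l) = (\<Sum>i<k. z (f i) * M r (f i))" for r
  proof -
    have "(\<Sum>l<m. M r l * z l) = (\<Sum>l\<in>f ` {..<k}. M r l * z l)"
      using f(2) z(2) by (intro sum.mono_neutral_right) auto
    also have "\<dots> = (\<Sum>i<k. z (f i) * M r (f i))"
      by (simp add: sum.reindex[OF f(1)] mult.commute)
    finally show ?thesis .
  qed
  have "\<forall>r<m'. [(\<Sum>i<k. z (f i) * M r (f i)) = 0] (mod p)"
    using z(1) unfolding mat_vec_cong_def reindex .
  then show ?thesis
    using indep[unfolded lin_indep_mod_def, rule_format, of "\<lambda>i. z (f i)"] i by simp
qed

lemma eq_if_cong_and_div_eq:
  fixes a b c p :: int
  assumes "[a = b] (mod p)" "(a + c) div p = (b + c) div p"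
  shows "a = b"
proof -
  have "(a + c) mod p = (b + c) mod p"
    using cong_add_rcancel[of a c b p] assms(1) by (simp add: cong_def)
  then have "a + c = b + c" by (metis assms(2) div_mult_mod_eq)
  then show ?thesis by simp
qed

lemma inj_on_pivot_quotients:
  fixes p c :: int
  assumes p: "prime p" and f: "\<forall>i<k. f i < m" and indep: "lin_indep_mod p m' (\<lambda>i r. M r (f i)) k"
  shows "inj_on (\<lambda>x i. if i \<in> f ` {..<k} then (x i + c) div p else x i) (Ssol p m' m M (\<lambda>_. 0) D)"
proof (rule inj_onI, rule ext)
  let ?P = "f ` {..<k}"
  fix x y l
  assume x: "x \<in> Ssol p m' m M (\<lambda>_. 0) D" and y: "y \<in> Ssol p m' m M (\<lambda>_. 0) D"
    and e: "(\<lambda>i. if i \<in> ?P then (x i + c) div p else x i) = (\<lambda>i. if i \<in> ?P then (y i + c) div p else y i)"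
  have free: "x l = y l" if "l \<notin> ?P" for l using fun_cong[OF e, of l] that by auto
  have "mat_vec_cong p m' m M (\<lambda>j. x j - y j) (\<lambda>r. 0 - 0)"
    using x y unfolding Ssol_def by (intro mat_vec_cong_diff) auto
  then have "[x (f i) - y (f i) = 0] (mod p)" if "i < k" for i
    using kernel_vector_vanishes_on_indep_columns[OF indep lin_indep_mod_columns_inj_on[where f = f, OF p indep] f,
        of "\<lambda>j. x j - y j"] that free
    by simp
  then have "[x l = y l] (mod p)" if "l \<in> ?P" for l
    using that by (auto simp: cong_iff_dvd_diff cong_0_iff)
  then show "x l = y l"
    using free fun_cong[OF e, of l] eq_if_cong_and_div_eq[of "x l" "y l" p c] by (cases "l \<in> ?P") auto
qed

lemma card_Ssol_centred_box_le:
  fixes p L :: int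
  assumes p: "prime p" and L: "1 \<le> L" "L \<le> p" and Ls: "\<forall>i<m. Ls i \<le> 2 * L"
    and f: "\<forall>i<k. f i < m" and indep: "lin_indep_mod p m' (\<lambda>i r. M r (f i)) k"
  shows "card (Ssol p m' m M (\<lambda>_. 0) (box m (\<lambda>i. - Ls i) Ls)) \<le> 5 ^ m * nat L ^ (m - k)"
proof -
  define S0 where "S0 = Ssol p m' m M (\<lambda>_. 0) (box m (\<lambda>i. - Ls i) Ls)"
  define P where "P = f ` {..<k}"
  have P: "P \<subseteq> {..<m}" "card P = k"
    using f card_image[OF lin_indep_mod_columns_inj_on[where f = f, OF p indep]] unfolding P_def by auto
  have p0: "p > 0" using p prime_gt_0_int by blast
  define A where "A = (\<lambda>i. if i \<in> P then {0..4::int} else {-2*L..2*L})"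
  define \<phi> where "\<phi> = (\<lambda>(x::nat\<Rightarrow>int) i. if i \<in> P then (x i + 2*L) div p else x i)"
  define T where "T = {y. (\<forall>i<m. y i \<in> A i) \<and> (\<forall>i\<ge>m. y i = 0)}"
  have inj: "inj_on \<phi> S0"
    unfolding \<phi>_def S0_def P_def by (rule inj_on_pivot_quotients[OF p f indep])
  have sub: "\<phi> ` S0 \<subseteq> T"
  proof (rule image_subsetI)
    fix x assume x: "x \<in> S0"
    have "\<phi> x i \<in> A i" if i: "i < m" for i
    proof -
      have "- Ls i \<le> x i" "x i \<le> Ls i" "Ls i \<le> 2 * L" using x i Ls unfolding S0_def Ssol_def box_def by auto
      then have "0 \<le> x i + 2*L" "x i + 2*L \<le> 4 * p" using L by linarith+
      then have "0 \<le> (x i + 2*L) div p" "(x i + 2*L) div p \<le> (4 * p) div p"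
        using p0 zdiv_mono1[of "x i + 2*L" "4 * p" p] by (simp_all add: pos_imp_zdiv_nonneg_iff)
      with \<open>- Ls i \<le> x i\<close> \<open>x i \<le> Ls i\<close> \<open>Ls i \<le> 2 * L\<close> show ?thesis
        using p0 unfolding \<phi>_def A_def by auto
    qed
    moreover have "\<phi> x i = 0" if "m \<le> i" for i
      using x that P(1) unfolding \<phi>_def S0_def Ssol_def box_def by auto
    ultimately show "\<phi> x \<in> T" unfolding T_def by blast
  qed
  have finA: "finite (A i)" for i by (simp add: A_def)
  have "card S0 \<le> card T"
    using card_inj_on_le[OF inj sub] finite_vectors_in[of m A] finA unfolding T_def by blast
  also have "\<dots> \<le> (\<Prod>i<m. card (A i))"
    using card_vectors_in_le[of m A] finA unfolding T_def by blast
  also have "\<dots> \<le> (\<Prod>i<m. 5 * (if i \<in> {..<m} - P then nat L else 1))"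
    using L by (intro prod_mono) (auto simp: A_def)
  also have "\<dots> = 5 ^ m * nat L ^ card ({..<m} - P)"
  proof -
    have "(\<Prod>i<m. (if i \<in> {..<m} - P then nat L else 1)) = (\<Prod>i\<in>{..<m} \<inter> ({..<m} - P). nat L)"
      by (rule prod.inter_restrict[symmetric]) simp
    then show ?thesis by (simp add: prod.distrib Int_absorb1)
  qed
  also have "\<dots> = 5 ^ m * nat L ^ (m - k)"
    using P by (simp add: card_Diff_subset finite_subset)
  finally show ?thesis unfolding S0_def .
qed

lemma lin_indep_mod_diagonal:
  assumes p: "prime p" and e: "\<forall>t<k. e t < n"
    and diag: "\<forall>t<k. \<forall>t'<k. t' \<noteq> t \<longrightarrow> vs t (e t') = 0"
    and nz: "\<forall>t<k. \<not> [vs t (e t) = 0] (mod p)"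
  shows "lin_indep_mod p n vs k"
  unfolding lin_indep_mod_def
proof (intro allI impI)
  fix c :: "nat \<Rightarrow> int" and t0
  assume c: "\<forall>j<n. [(\<Sum>t<k. c t * vs t j) = 0] (mod p)" and t0: "t0 < k"
  have "(\<Sum>t<k. c t * vs t (e t0)) = (\<Sum>t<k. if t = t0 then c t0 * vs t0 (e t0) else 0)"
    using diag t0 by (intro sum.cong) auto
  then have "[c t0 * vs t0 (e t0) = 0] (mod p)" using c[rule_format, of "e t0"] e t0 by simp
  then show "[c t0 = 0] (mod p)" using not_cong_zero_mult[OF p] nz t0 by blast
qed

lemma kernel_vector_through_column:
  assumes p: "prime p" and f: "\<forall>i<m'. f i < m" and indep: "lin_indep_mod p m' (\<lambda>i r. M r (f i)) m'"
    and j: "j < m" "j \<notin> f ` {..<m'}"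
  obtains v where "mat_vec_cong p m' m M v (\<lambda>_. 0)" "\<not> [v j = 0] (mod p)"
    "\<forall>l. l \<noteq> j \<and> l \<notin> f ` {..<m'} \<longrightarrow> v l = 0"
proof -
  define w where "w = (\<lambda>i r. if i < m' then M r (f i) else M r j)"
  have split: "(\<Sum>i\<in>{..m'}. c i * w i r) = (\<Sum>i<m'. c i * M r (f i)) + c m' * M r j" for c r
    by (simp add: lessThan_Suc_atMost[symmetric] w_def)
  obtain c i0 where c: "\<forall>r<m'. [(\<Sum>i\<in>{..m'}. c i * w i r) = 0] (mod p)" "i0 \<le> m'" "\<not> [c i0 = 0] (mod p)"
    using exists_nontrivial_relation_mod[OF p, of "{..m'}" m' w] by auto
  have cm: "\<not> [c m' = 0] (mod p)"
  proof
    assume c0: "[c m' = 0] (mod p)"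
    have last: "[c m' * M r j = 0] (mod p)" for r using cong_scalar_right[OF c0, of "M r j"] by simp
    have "[(\<Sum>i<m'. c i * M r (f i)) = 0] (mod p)" if "r < m'" for r
      using cong_diff[OF c(1)[rule_format, OF that, unfolded split] last[of r]] by simp
    then have "\<forall>i<m'. [c i = 0] (mod p)"
      using indep[unfolded lin_indep_mod_def, rule_format, of c] by simp
    then show False using c(2,3) c0 by (cases "i0 = m'") auto
  qed
  define v where "v = (\<lambda>l. (\<Sum>i<m'. if f i = l then c i else 0) + (if l = j then c m' else 0))"
  have "(\<Sum>l<m. M r l * v l) = (\<Sum>i<m'. c i * M r (f i)) + c m' * M r j" for r
  proof -
    have "(\<Sum>l<m. M r l * v l)
        = (\<Sum>l<m. \<Sum>i<m'. if f i = l then c i * M r l else 0) + (\<Sum>l<m. if l = j then c m' * M r l else 0)"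
      unfolding v_def sum.distrib[symmetric] by (intro sum.cong) (auto simp: algebra_simps sum_distrib_left intro!: sum.cong)
    also have "\<dots> = (\<Sum>i<m'. c i * M r (f i)) + c m' * M r j"
      using f j(1) by (subst sum.swap) simp
    finally show ?thesis .
  qed
  then have "mat_vec_cong p m' m M v (\<lambda>_. 0)"
    using c(1) unfolding mat_vec_cong_def split by simp
  moreover have "v j = c m'" "\<forall>l. l \<noteq> j \<and> l \<notin> f ` {..<m'} \<longrightarrow> v l = 0"
    using j(2) unfolding v_def by (auto intro!: sum.neutral)
  ultimately show ?thesis using that cm by simp
qed

lemma ker_dim_mod_ge_free_columns:
  assumes p: "prime p" and f: "\<forall>i<m'. f i < m" and indep: "lin_indep_mod p m' (\<lambda>i r. M r (f i)) m'"
  shows "m - m' \<le> ker_dim_mod p m' m M"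
proof -
  define F where "F = {..<m} - f ` {..<m'}"
  have "card F = m - m'"
    using f card_image[OF lin_indep_mod_columns_inj_on[where f = f, OF p indep]] unfolding F_def
    by (subst card_Diff_subset) auto
  have "\<forall>j\<in>F. \<exists>v. mat_vec_cong p m' m M v (\<lambda>_. 0) \<and> \<not> [v j = 0] (mod p)
      \<and> (\<forall>l. l \<noteq> j \<and> l \<notin> f ` {..<m'} \<longrightarrow> v l = 0)"
  proof
    fix j assume "j \<in> F"
    then have "j < m" "j \<notin> f ` {..<m'}" unfolding F_def by auto
    then show "\<exists>v. mat_vec_cong p m' m M v (\<lambda>_. 0) \<and> \<not> [v j = 0] (mod p)
      \<and> (\<forall>l. l \<noteq> j \<and> l \<notin> f ` {..<m'} \<longrightarrow> v l = 0)"
      by (rule kernel_vector_through_column[OF p f indep]) blast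
  qed
  then obtain V where V: "\<forall>j\<in>F. mat_vec_cong p m' m M (V j) (\<lambda>_. 0) \<and> \<not> [V j j = 0] (mod p)
      \<and> (\<forall>l. l \<noteq> j \<and> l \<notin> f ` {..<m'} \<longrightarrow> V j l = 0)"
    by (metis bchoice)
  obtain e where e: "bij_betw e {..<card F} F"
    using ex_bij_betw_nat_finite[of F] by (auto simp: F_def atLeast0LessThan)
  have eF: "e t \<in> F" "e t < m" if "t < card F" for t
    using bij_betwE[OF e] that unfolding F_def by auto
  have "lin_indep_mod p m (\<lambda>t. V (e t)) (card F)"
  proof (rule lin_indep_mod_diagonal[OF p])
    have "e t' \<noteq> e t" if "t < card F" "t' < card F" "t' \<noteq> t" for t t'
      using inj_onD[OF bij_betw_imp_inj_on[OF e]] that by blast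
    then show "\<forall>t<card F. \<forall>t'<card F. t' \<noteq> t \<longrightarrow> V (e t) (e t') = 0"
      using V eF unfolding F_def by blast
  qed (use V eF in auto)
  moreover have "\<forall>t<card F. mat_vec_cong p m' m M (V (e t)) (\<lambda>_. 0)" using V eF by blast
  ultimately show ?thesis using le_ker_dim_mod[OF p] \<open>card F = m - m'\<close> by metis
qed

lemma card_Ssol_centred_box_le_ker_dim:
  fixes p L :: int
  assumes p: "prime p" and L: "1 \<le> L" "L \<le> p" and Ls: "\<forall>i<m. Ls i \<le> 2 * L"
    and rank: "rank_mod p m' m M = min m' m"
  shows "real (card (Ssol p m' m M (\<lambda>_. 0) (box m (\<lambda>i. - Ls i) Ls)))
    \<le> 5 ^ m * real_of_int L ^ ker_dim_mod p m' m M"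
proof -
  obtain f where f: "\<forall>i<min m' m. f i < m" and indep: "lin_indep_mod p m' (\<lambda>i r. M r (f i)) (min m' m)"
    using rank_mod_witness[OF p] rank by metis
  have "real (card (Ssol p m' m M (\<lambda>_. 0) (box m (\<lambda>i. - Ls i) Ls))) \<le> real (5 ^ m * nat L ^ (m - min m' m))"
    using card_Ssol_centred_box_le[OF p L Ls f indep] by (simp only: of_nat_le_iff)
  also have "\<dots> = 5 ^ m * real_of_int L ^ (m - min m' m)"
    using L by simp
  also have "\<dots> \<le> 5 ^ m * real_of_int L ^ ker_dim_mod p m' m M"
  proof (cases "m \<le> m'")
    case False
    then have "min m' m = m'" by simp
    then have "m - min m' m \<le> ker_dim_mod p m' m M"
      using ker_dim_mod_ge_free_columns[OF p] f indep by metis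
    then show ?thesis using L by (intro mult_left_mono power_increasing) auto
  qed (use L in simp)
  finally show ?thesis .
qed

theorem lemma4p1:
  fixes m :: nat
  shows "(\<forall>(p::int) (m'::nat) (M::nat \<Rightarrow> nat \<Rightarrow> int) (L::int) (Ls::nat \<Rightarrow> int) (N::nat \<Rightarrow> int) (b::nat \<Rightarrow> int).
            prime p \<and> 1 \<le> L \<and> L \<le> p \<and> (\<forall>i<m. L \<le> Ls i \<and> Ls i \<le> 2 * L) \<longrightarrow>
            card (Ssol p m' m M b (box m N (\<lambda>i. N i + Ls i)))
              \<le> card (Ssol p m' m M (\<lambda>_. 0) (box m (\<lambda>i. - Ls i) Ls)))
       \<and> (\<exists>C::real. \<forall>(p::int) (m'::nat) (M::nat \<Rightarrow> nat \<Rightarrow> int) (L::int) (Ls::nat \<Rightarrow> int).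
            prime p \<and> 1 \<le> L \<and> L \<le> p \<and> (\<forall>i<m. L \<le> Ls i \<and> Ls i \<le> 2 * L)
            \<and> rank_mod p m' m M = min m' m \<longrightarrow>
            real (card (Ssol p m' m M (\<lambda>_. 0) (box m (\<lambda>i. - Ls i) Ls)))
              \<le> C * real_of_int L ^ ker_dim_mod p m' m M)"
proof (intro conjI allI impI)
  fix p :: int and m' M L Ls N b
  show "card (Ssol p m' m M b (box m N (\<lambda>i. N i + Ls i)))
      \<le> card (Ssol p m' m M (\<lambda>_. 0) (box m (\<lambda>i. - Ls i) Ls))"
    by (rule card_Ssol_box_le_card_Ssol_centred)
next
  show "\<exists>C::real. \<forall>p m' M L Ls. prime p \<and> 1 \<le> L \<and> L \<le> p \<and> (\<forall>i<m. L \<le> Ls i \<and> Ls i \<le> 2 * L)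
      \<and> rank_mod p m' m M = min m' m \<longrightarrow>
      real (card (Ssol p m' m M (\<lambda>_. 0) (box m (\<lambda>i. - Ls i) Ls))) \<le> C * real_of_int L ^ ker_dim_mod p m' m M"
    by (intro exI[of _ "5 ^ m"] allI impI) (blast intro: card_Ssol_centred_box_le_ker_dim)
qed

end
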